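(* Let $L$ be a pretransitive logic. Then for all formulas $\varphi,\psi$: $$L[1]\vdash\Box^*\psi\to\Box^*\varphi\quad\text{iff}\quad L\vdash\Diamond^*\Box^*\psi\to\Diamond^*\Box^*\varphi.$$
   Context: Logics are normal $n$-modal logics. $\Diamond^0\varphi=\varphi$, $\Diamond^{i+1}\varphi=\Diamond^i(\bigvee_{j<n}\Diamond_j\varphi)$, $\Diamond^{\le m}\varphi=\bigvee_{i\le m}\Diamond^i\varphi$. $L$ is pretransitive if $L\vdash\Diamond^{m+1}p\to\Diamond^{\le m}p$ for some $m$; for the least such $m$ (for $L$), $\Diamond^*=\Diamond^{\le m}$ and $\Box^*=\neg\Diamond^*\neg$; these same abbreviations are used in $L[1]$. $B_1=p_1\to\Box^*(\Diamond^*p_1\vee\bot)$, and $L[1]$ is the smallest logic containing $L\cup\{B_1\}$. *)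

theory Defs
  imports Main
begin

datatype fm = Var nat | Bot | Imp fm fm | Box nat fm

fun wf :: "nat \<Rightarrow> fm \<Rightarrow> bool" where
  "wf n (Var k) = True"
| "wf n Bot = True"
| "wf n (Imp a b) = (wf n a \<and> wf n b)"
| "wf n (Box i a) = (i < n \<and> wf n a)"

definition Neg :: "fm \<Rightarrow> fm" where "Neg a = Imp a Bot"
definition Or :: "fm \<Rightarrow> fm \<Rightarrow> fm" where "Or a b = Imp (Neg a) b"
definition Dia :: "nat \<Rightarrow> fm \<Rightarrow> fm" where "Dia i a = Neg (Box i (Neg a))"

definition BigOr :: "fm list \<Rightarrow> fm" where "BigOr xs = foldr Or xs Bot"

fun subst :: "(nat \<Rightarrow> fm) \<Rightarrow> fm \<Rightarrow> fm" where
  "subst s (Var k) = s k"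
| "subst s Bot = Bot"
| "subst s (Imp a b) = Imp (subst s a) (subst s b)"
| "subst s (Box i a) = Box i (subst s a)"

definition normal_logic :: "nat \<Rightarrow> fm set \<Rightarrow> bool" where
  "normal_logic n L \<longleftrightarrow>
     (\<forall>a\<in>L. wf n a)
   \<and> (\<forall>a b. wf n a \<longrightarrow> wf n b \<longrightarrow> Imp a (Imp b a) \<in> L)
   \<and> (\<forall>a b c. wf n a \<longrightarrow> wf n b \<longrightarrow> wf n c \<longrightarrow>
        Imp (Imp a (Imp b c)) (Imp (Imp a b) (Imp a c)) \<in> L)
   \<and> (\<forall>a. wf n a \<longrightarrow> Imp (Neg (Neg a)) a \<in> L)
   \<and> (\<forall>i a b. i < n \<longrightarrow> wf n a \<longrightarrow> wf n b \<longrightarrow>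
        Imp (Box i (Imp a b)) (Imp (Box i a) (Box i b)) \<in> L)
   \<and> (\<forall>a b. a \<in> L \<longrightarrow> Imp a b \<in> L \<longrightarrow> b \<in> L)
   \<and> (\<forall>i a. i < n \<longrightarrow> a \<in> L \<longrightarrow> Box i a \<in> L)
   \<and> (\<forall>s a. (\<forall>k. wf n (s k)) \<longrightarrow> a \<in> L \<longrightarrow> subst s a \<in> L)"

definition dia_any :: "nat \<Rightarrow> fm \<Rightarrow> fm" where
  "dia_any n a = BigOr (map (\<lambda>j. Dia j a) [0..<n])"

fun dia_pow :: "nat \<Rightarrow> nat \<Rightarrow> fm \<Rightarrow> fm" where
  "dia_pow n 0 a = a"
| "dia_pow n (Suc i) a = dia_pow n i (dia_any n a)"

definition dia_le :: "nat \<Rightarrow> nat \<Rightarrow> fm \<Rightarrow> fm" where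
  "dia_le n m a = BigOr (map (\<lambda>i. dia_pow n i a) [0..<Suc m])"

definition pretrans_ax :: "nat \<Rightarrow> nat \<Rightarrow> fm" where
  "pretrans_ax n m = Imp (dia_pow n (Suc m) (Var 0)) (dia_le n m (Var 0))"

definition pretransitive :: "nat \<Rightarrow> fm set \<Rightarrow> bool" where
  "pretransitive n L \<longleftrightarrow> (\<exists>m. pretrans_ax n m \<in> L)"

definition pt_index :: "nat \<Rightarrow> fm set \<Rightarrow> nat" where
  "pt_index n L = (LEAST m. pretrans_ax n m \<in> L)"

definition DiaS :: "nat \<Rightarrow> fm set \<Rightarrow> fm \<Rightarrow> fm" where
  "DiaS n L a = dia_le n (pt_index n L) a"

definition BoxS :: "nat \<Rightarrow> fm set \<Rightarrow> fm \<Rightarrow> fm" where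
  "BoxS n L a = Neg (DiaS n L (Neg a))"

definition B1 :: "nat \<Rightarrow> fm set \<Rightarrow> fm" where
  "B1 n L = Imp (Var 1) (BoxS n L (Or (DiaS n L (Var 1)) Bot))"

text \<open>L[1]: smallest normal n-modal logic containing L and B1.\<close>
definition ext1 :: "nat \<Rightarrow> fm set \<Rightarrow> fm set" where
  "ext1 n L = \<Inter>{L'. normal_logic n L' \<and> L \<subseteq> L' \<and> B1 n L \<in> L'}"

end

theory Submission
  imports Defs
begin

text \<open>Both directions are read off canonical models, in which, thanks to pretransitivity,
  \<open>\<Diamond>\<^sup>*\<close> is interpreted by reachability in any number of steps.
  If \<open>L \<turnstile> \<Diamond>\<^sup>*\<box>\<^sup>*\<psi> \<rightarrow> \<Diamond>\<^sup>*\<box>\<^sup>*\<phi>\<close>, take a maximal consistent set \<open>x\<close> of an arbitrary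
  normal logic containing \<open>L\<close> and \<open>B\<^sub>1\<close> with \<open>\<box>\<^sup>*\<psi> \<in> x\<close>: some point reachable from \<open>x\<close>
  satisfies \<open>\<box>\<^sup>*\<phi>\<close>, and \<open>B\<^sub>1\<close>, which makes reachability symmetric, carries \<open>\<box>\<^sup>*\<phi>\<close> back to \<open>x\<close>.
  Conversely, if \<open>\<Diamond>\<^sup>*\<box>\<^sup>*\<psi> \<and> \<not>\<Diamond>\<^sup>*\<box>\<^sup>*\<phi>\<close> holds at a point of the canonical model of \<open>L\<close>,
  Zorn's lemma yields a final cluster \<open>z\<close> above a point satisfying \<open>\<box>\<^sup>*\<psi>\<close>. The formulas all
  of whose substitution instances hold throughout the cone above \<open>z\<close> form a normal logic
  containing \<open>L\<close> and \<open>B\<^sub>1\<close>, hence \<open>L[1]\<close>; but \<open>z\<close> refutes \<open>\<box>\<^sup>*\<psi> \<rightarrow> \<box>\<^sup>*\<phi>\<close>.\<close>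

lemma wf_Neg [simp]: "wf n (Neg a) = wf n a" by (simp add: Neg_def)
lemma wf_Or [simp]: "wf n (Or a b) = (wf n a \<and> wf n b)" by (simp add: Or_def)
lemma wf_Dia [simp]: "wf n (Dia i a) = (i < n \<and> wf n a)" by (simp add: Dia_def)
lemma BigOr_Nil [simp]: "BigOr [] = Bot" by (simp add: BigOr_def)
lemma BigOr_Cons [simp]: "BigOr (a # xs) = Or a (BigOr xs)" by (simp add: BigOr_def)

lemma wf_BigOr [simp]: "wf n (BigOr xs) = (\<forall>a\<in>set xs. wf n a)"
  by (induction xs) auto

lemma wf_dia_any [simp]: "wf n a \<Longrightarrow> wf n (dia_any n a)"
  by (auto simp: dia_any_def)

lemma wf_dia_pow [simp]: "wf n a \<Longrightarrow> wf n (dia_pow n k a)"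
  by (induction k arbitrary: a) auto

lemma wf_dia_le [simp]: "wf n a \<Longrightarrow> wf n (dia_le n k a)"
  by (auto simp: dia_le_def)

lemma wf_subst: "wf n a \<Longrightarrow> (\<And>k. wf n (s k)) \<Longrightarrow> wf n (subst s a)"
  by (induction a) auto

lemma subst_Neg [simp]: "subst s (Neg a) = Neg (subst s a)" by (simp add: Neg_def)
lemma subst_Or [simp]: "subst s (Or a b) = Or (subst s a) (subst s b)" by (simp add: Or_def)
lemma subst_Dia [simp]: "subst s (Dia i a) = Dia i (subst s a)" by (simp add: Dia_def)

lemma subst_BigOr: "subst s (BigOr xs) = BigOr (map (subst s) xs)"
  by (induction xs) auto

lemma subst_dia_any [simp]: "subst s (dia_any n a) = dia_any n (subst s a)"
  by (simp add: dia_any_def subst_BigOr comp_def)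

lemma subst_dia_pow [simp]: "subst s (dia_pow n k a) = dia_pow n k (subst s a)"
  by (induction k arbitrary: a) auto

lemma subst_dia_le [simp]: "subst s (dia_le n k a) = dia_le n k (subst s a)"
  by (simp add: dia_le_def subst_BigOr comp_def)

lemma subst_subst: "subst s' (subst s a) = subst (\<lambda>k. subst s' (s k)) a"
  by (induction a) auto

lemma subst_Var_id: "subst Var a = a"
  by (induction a) auto

lemma subst_B1:
  "subst s (B1 n L) = Imp (s 1) (BoxS n L (Or (DiaS n L (s 1)) Bot))"
  by (simp add: B1_def BoxS_def DiaS_def)

lemma wf_B1: "wf n (B1 n L)"
  by (simp add: B1_def BoxS_def DiaS_def)

lemma pretrans_ax_pt_index: "pretransitive n L \<Longrightarrow> pretrans_ax n (pt_index n L) \<in> L"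
  unfolding pretransitive_def pt_index_def by (rule LeastI_ex)


locale normal_modal_logic =
  fixes n :: nat and L :: "fm set"
  assumes normal: "normal_logic n L"
begin

lemma theorem_wf: "a \<in> L \<Longrightarrow> wf n a"
  using normal unfolding normal_logic_def by meson

lemma ax_weaken: "wf n a \<Longrightarrow> wf n b \<Longrightarrow> Imp a (Imp b a) \<in> L"
  using normal unfolding normal_logic_def by meson

lemma ax_imp_distrib:
  "wf n a \<Longrightarrow> wf n b \<Longrightarrow> wf n c \<Longrightarrow> Imp (Imp a (Imp b c)) (Imp (Imp a b) (Imp a c)) \<in> L"
  using normal unfolding normal_logic_def by meson

lemma ax_double_neg: "wf n a \<Longrightarrow> Imp (Neg (Neg a)) a \<in> L"
  using normal unfolding normal_logic_def by meson

lemma ax_K: "i < n \<Longrightarrow> wf n a \<Longrightarrow> wf n b \<Longrightarrow> Imp (Box i (Imp a b)) (Imp (Box i a) (Box i b)) \<in> L"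
  using normal unfolding normal_logic_def by meson

lemma mp_closed: "a \<in> L \<Longrightarrow> Imp a b \<in> L \<Longrightarrow> b \<in> L"
  using normal unfolding normal_logic_def by meson

lemma nec_closed: "i < n \<Longrightarrow> a \<in> L \<Longrightarrow> Box i a \<in> L"
  using normal unfolding normal_logic_def by meson

lemma subst_closed: "(\<And>k. wf n (s k)) \<Longrightarrow> a \<in> L \<Longrightarrow> subst s a \<in> L"
  using normal unfolding normal_logic_def by meson

lemma imp_refl: "wf n a \<Longrightarrow> Imp a a \<in> L"
  by (meson mp_closed ax_imp_distrib ax_weaken wf.simps(3))

inductive derivable :: "fm set \<Rightarrow> fm \<Rightarrow> bool" for G where
  logic: "a \<in> L \<Longrightarrow> derivable G a"
| hyp: "a \<in> G \<Longrightarrow> derivable G a"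
| mp: "derivable G (Imp a b) \<Longrightarrow> derivable G a \<Longrightarrow> derivable G b"

lemma derivable_wf: "derivable G a \<Longrightarrow> \<forall>g\<in>G. wf n g \<Longrightarrow> wf n a"
  by (induction rule: derivable.induct) (auto simp: theorem_wf)

lemma derivable_mono: "derivable G a \<Longrightarrow> G \<subseteq> H \<Longrightarrow> derivable H a"
  by (induction rule: derivable.induct) (auto intro: derivable.intros)

lemma derivable_finite: "derivable G a \<Longrightarrow> \<exists>D. finite D \<and> D \<subseteq> G \<and> derivable D a"
proof (induction rule: derivable.induct)
  case (logic a)
  then show ?case by (auto intro: derivable.logic)
next
  case (hyp a)
  then show ?case by (intro exI[of _ "{a}"]) (auto intro: derivable.hyp)
next
  case (mp a b)
  then obtain D1 D2 where "finite D1" "D1 \<subseteq> G" "derivable D1 (Imp a b)"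
    and "finite D2" "D2 \<subseteq> G" "derivable D2 a" by blast
  then show ?case
    by (intro exI[of _ "D1 \<union> D2"])
       (auto intro: derivable.mp derivable_mono[of D1] derivable_mono[of D2])
qed

lemma derivable_empty: "derivable {} a \<Longrightarrow> a \<in> L"
  by (induction rule: derivable.induct) (auto intro: mp_closed)

lemma deduction:
  assumes "derivable (insert a G) b" and "wf n a" and "\<forall>g\<in>G. wf n g"
  shows "derivable G (Imp a b)"
  using assms
proof (induction rule: derivable.induct)
  case (logic b)
  then show ?case
    by (meson ax_weaken derivable.mp derivable.logic theorem_wf)
next
  case (hyp b)
  then show ?case
    by (metis ax_weaken derivable.hyp derivable.mp derivable.logic imp_refl insertE)
next
  case (mp b c)
  then have "wf n b" "wf n c"
    using derivable_wf[OF mp.hyps(1)] by auto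
  with mp show ?case
    by (meson ax_imp_distrib derivable.mp derivable.logic)
qed

lemma derivable_by_contradiction:
  assumes "derivable (insert (Neg a) G) Bot" and "wf n a" and "\<forall>g\<in>G. wf n g"
  shows "derivable G a"
proof -
  have "derivable G (Neg (Neg a))"
    using deduction[OF assms(1)] assms(2,3) by (simp add: Neg_def[of "Neg a"])
  then show ?thesis
    using ax_double_neg[OF assms(2)] by (meson derivable.mp derivable.logic)
qed

definition mcs :: "fm set \<Rightarrow> bool" where
  "mcs x \<longleftrightarrow> (\<forall>a\<in>x. wf n a) \<and> \<not> derivable x Bot
     \<and> (\<forall>a. wf n a \<longrightarrow> a \<notin> x \<longrightarrow> derivable (insert a x) Bot)"

lemma consistent_Union_chain:
  assumes "C \<noteq> {}" and "subset.chain A C" and "\<forall>X\<in>C. \<not> derivable X Bot"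
  shows "\<not> derivable (\<Union>C) Bot"
proof
  assume "derivable (\<Union>C) Bot"
  then obtain D where "finite D" "D \<subseteq> \<Union>C" "derivable D Bot"
    using derivable_finite by blast
  moreover obtain X where "X \<in> C" "D \<subseteq> X"
    using finite_subset_Union_chain[OF \<open>finite D\<close> \<open>D \<subseteq> \<Union>C\<close> assms(1,2)] by blast
  ultimately show False
    using assms(3) derivable_mono by blast
qed

lemma lindenbaum:
  assumes "\<forall>a\<in>G. wf n a" and "\<not> derivable G Bot"
  shows "\<exists>x. mcs x \<and> G \<subseteq> x"
proof -
  define A where "A = {X. G \<subseteq> X \<and> (\<forall>a\<in>X. wf n a) \<and> \<not> derivable X Bot}"
  have "\<forall>C\<in>chains A. \<exists>U\<in>A. \<forall>X\<in>C. X \<subseteq> U"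
  proof
    fix C assume C: "C \<in> chains A"
    show "\<exists>U\<in>A. \<forall>X\<in>C. X \<subseteq> U"
    proof (cases "C = {}")
      case True
      then show ?thesis using assms by (auto simp: A_def)
    next
      case False
      have "subset.chain A C"
        using C by (simp add: chains_def chain_subset_def subset_chain_def)
      then have "\<not> derivable (\<Union>C) Bot"
        using consistent_Union_chain[OF False] C by (auto simp: chains_def A_def)
      moreover have "G \<subseteq> \<Union>C" "\<forall>a\<in>\<Union>C. wf n a"
        using False C by (auto simp: chains_def A_def)
      ultimately show ?thesis by (auto simp: A_def)
    qed
  qed
  from Zorn_Lemma2[OF this] obtain M where M: "M \<in> A" "\<forall>X\<in>A. M \<subseteq> X \<longrightarrow> X = M"
    by blast
  have "derivable (insert a M) Bot" if "wf n a" "a \<notin> M" for a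
  proof (rule ccontr)
    assume "\<not> derivable (insert a M) Bot"
    then have "insert a M \<in> A" using M(1) \<open>wf n a\<close> by (auto simp: A_def)
    then show False using M(2) \<open>a \<notin> M\<close> by blast
  qed
  then show ?thesis using M(1) by (auto simp: A_def mcs_def)
qed

lemma theorem_if_in_all_mcs:
  assumes "wf n a" and "\<And>x. mcs x \<Longrightarrow> a \<in> x"
  shows "a \<in> L"
proof (rule ccontr)
  assume "a \<notin> L"
  then have "\<not> derivable {Neg a} Bot"
    using derivable_by_contradiction[of a "{}"] derivable_empty assms(1) by auto
  then obtain x where "mcs x" "Neg a \<in> x"
    using lindenbaum[of "{Neg a}"] assms(1) by auto
  then show False
    using assms(2) by (metis mcs_def derivable.hyp derivable.mp Neg_def)
qed

context
  fixes x assumes x: "mcs x"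
begin

lemma mcs_wf: "a \<in> x \<Longrightarrow> wf n a"
  using x by (auto simp: mcs_def)

lemma mcs_derivable: "derivable x a \<Longrightarrow> a \<in> x"
proof (rule ccontr)
  assume d: "derivable x a" and "a \<notin> x"
  have w: "\<forall>g\<in>x. wf n g" using x by (auto simp: mcs_def)
  then have "wf n a" using derivable_wf[OF d] by blast
  then have "derivable (insert a x) Bot" using x \<open>a \<notin> x\<close> by (auto simp: mcs_def)
  then have "derivable x Bot"
    using deduction[OF _ \<open>wf n a\<close> w] d derivable.mp by blast
  then show False using x by (auto simp: mcs_def)
qed

lemma mcs_theorem: "a \<in> L \<Longrightarrow> a \<in> x"
  by (rule mcs_derivable) (rule derivable.logic)

lemma mcs_Bot: "Bot \<notin> x"
  using x derivable.hyp by (auto simp: mcs_def)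

lemma mcs_Imp:
  assumes "wf n a" "wf n b"
  shows "Imp a b \<in> x \<longleftrightarrow> (a \<in> x \<longrightarrow> b \<in> x)"
proof
  assume "Imp a b \<in> x"
  then show "a \<in> x \<longrightarrow> b \<in> x" by (meson mcs_derivable derivable.hyp derivable.mp)
next
  assume h: "a \<in> x \<longrightarrow> b \<in> x"
  have w: "\<forall>g\<in>x. wf n g" using x by (auto simp: mcs_def)
  show "Imp a b \<in> x"
  proof (cases "a \<in> x")
    case True
    then show ?thesis
      using h assms by (meson ax_weaken derivable.logic derivable.hyp derivable.mp mcs_derivable)
  next
    case False
    then have "derivable (insert a x) Bot" using x assms by (auto simp: mcs_def)
    then have "derivable (insert (Neg b) (insert a x)) Bot"
      using derivable_mono by blast
    then have "derivable (insert a x) b"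
      using derivable_by_contradiction w assms by simp
    then show ?thesis using deduction w assms mcs_derivable by blast
  qed
qed

lemma mcs_Neg: "wf n a \<Longrightarrow> Neg a \<in> x \<longleftrightarrow> a \<notin> x"
  using mcs_Imp mcs_Bot by (simp add: Neg_def)

lemma mcs_Or: "wf n a \<Longrightarrow> wf n b \<Longrightarrow> Or a b \<in> x \<longleftrightarrow> a \<in> x \<or> b \<in> x"
  using mcs_Imp mcs_Neg by (auto simp: Or_def)

lemma mcs_BigOr: "\<forall>a\<in>set xs. wf n a \<Longrightarrow> BigOr xs \<in> x \<longleftrightarrow> (\<exists>a\<in>set xs. a \<in> x)"
  by (induction xs) (auto simp: mcs_Bot mcs_Or)

end

definition canon_rel :: "nat \<Rightarrow> fm set \<Rightarrow> fm set \<Rightarrow> bool" where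
  "canon_rel i x y \<longleftrightarrow> (\<forall>a. Box i a \<in> x \<longrightarrow> a \<in> y)"

lemma mcs_Box_if_derivable:
  assumes x: "mcs x" and i: "i < n"
  shows "\<forall>b\<in>set bs. Box i b \<in> x \<Longrightarrow> derivable (set bs) c \<Longrightarrow> Box i c \<in> x"
proof (induction bs arbitrary: c)
  case Nil
  then show ?case using derivable_empty nec_closed i mcs_theorem[OF x] by auto
next
  case (Cons b bs)
  have wb: "\<forall>g\<in>set (b # bs). wf n g" using Cons.prems mcs_wf[OF x] by force
  have wc: "wf n c" using derivable_wf[OF Cons.prems(2) wb] .
  have "derivable (set bs) (Imp b c)" using deduction[of b "set bs" c] Cons.prems wb by auto
  then have "Box i (Imp b c) \<in> x" using Cons by auto
  moreover have "Imp (Box i (Imp b c)) (Imp (Box i b) (Box i c)) \<in> x"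
    using ax_K[OF i] wb wc mcs_theorem[OF x] by auto
  ultimately show ?case using Cons.prems mcs_Imp[OF x] wb wc i by auto
qed

lemma mcs_Box:
  assumes x: "mcs x" and i: "i < n" and a: "wf n a"
  shows "Box i a \<in> x \<longleftrightarrow> (\<forall>y. mcs y \<longrightarrow> canon_rel i x y \<longrightarrow> a \<in> y)"
proof
  assume "Box i a \<in> x"
  then show "\<forall>y. mcs y \<longrightarrow> canon_rel i x y \<longrightarrow> a \<in> y" by (auto simp: canon_rel_def)
next
  assume h: "\<forall>y. mcs y \<longrightarrow> canon_rel i x y \<longrightarrow> a \<in> y"
  define G where "G = {b. Box i b \<in> x}"
  have wG: "\<forall>g\<in>G. wf n g" using mcs_wf[OF x] by (force simp: G_def)
  show "Box i a \<in> x"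
  proof (rule ccontr)
    assume nb: "Box i a \<notin> x"
    have "\<not> derivable (insert (Neg a) G) Bot"
    proof
      assume "derivable (insert (Neg a) G) Bot"
      then obtain D where D: "finite D" "D \<subseteq> insert (Neg a) G" "derivable D Bot"
        using derivable_finite by blast
      have "derivable (insert (Neg a) (D - {Neg a})) Bot"
        by (rule derivable_mono[OF D(3)]) blast
      moreover have "\<forall>g\<in>D - {Neg a}. wf n g" using wG D(2) by blast
      ultimately have "derivable (D - {Neg a}) a"
        using derivable_by_contradiction a by blast
      moreover obtain bs where "set bs = D - {Neg a}" using finite_list D(1) by blast
      ultimately have "Box i a \<in> x"
        using mcs_Box_if_derivable[OF x i, of bs a] D(2) by (auto simp: G_def)
      then show False using nb by simp
    qed
    moreover have "\<forall>g\<in>insert (Neg a) G. wf n g" using wG a by simp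
    ultimately obtain y where y: "mcs y" "insert (Neg a) G \<subseteq> y"
      using lindenbaum by blast
    then have "canon_rel i x y" by (auto simp: canon_rel_def G_def)
    then show False using h y mcs_Neg[OF y(1) a] by blast
  qed
qed

lemma mcs_Dia:
  assumes x: "mcs x" and i: "i < n" and a: "wf n a"
  shows "Dia i a \<in> x \<longleftrightarrow> (\<exists>y. mcs y \<and> canon_rel i x y \<and> a \<in> y)"
proof -
  have "Dia i a \<in> x \<longleftrightarrow> Box i (Neg a) \<notin> x"
    unfolding Dia_def using mcs_Neg[OF x] i a by simp
  also have "\<dots> \<longleftrightarrow> \<not> (\<forall>y. mcs y \<longrightarrow> canon_rel i x y \<longrightarrow> Neg a \<in> y)"
    using mcs_Box[OF x i] a by simp
  also have "\<dots> \<longleftrightarrow> (\<exists>y. mcs y \<and> canon_rel i x y \<and> a \<in> y)"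
    using mcs_Neg[OF _ a] by auto
  finally show ?thesis .
qed

definition canon_step :: "fm set \<Rightarrow> fm set \<Rightarrow> bool" where
  "canon_step x y \<longleftrightarrow> (\<exists>i<n. canon_rel i x y)"

lemma mcs_dia_any:
  assumes x: "mcs x" and a: "wf n a"
  shows "dia_any n a \<in> x \<longleftrightarrow> (\<exists>y. mcs y \<and> canon_step x y \<and> a \<in> y)"
proof -
  have "dia_any n a \<in> x \<longleftrightarrow> (\<exists>j<n. Dia j a \<in> x)"
    using mcs_BigOr[OF x] a by (auto simp: dia_any_def)
  then show ?thesis
    unfolding canon_step_def using mcs_Dia[OF x _ a] by blast
qed

fun canon_path :: "nat \<Rightarrow> fm set \<Rightarrow> fm set \<Rightarrow> bool" where
  "canon_path 0 x y \<longleftrightarrow> x = y"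
| "canon_path (Suc k) x z \<longleftrightarrow> (\<exists>y. canon_path k x y \<and> mcs y \<and> canon_step y z \<and> mcs z)"

lemma canon_path_mcs: "canon_path k x y \<Longrightarrow> mcs x \<Longrightarrow> mcs y"
  by (cases k) auto

lemma canon_path_add: "canon_path (i + j) x z \<longleftrightarrow> (\<exists>y. canon_path i x y \<and> canon_path j y z)"
  by (induction j arbitrary: z) auto

lemma mcs_dia_pow:
  assumes x: "mcs x"
  shows "wf n a \<Longrightarrow> dia_pow n k a \<in> x \<longleftrightarrow> (\<exists>y. canon_path k x y \<and> a \<in> y)"
proof (induction k arbitrary: a)
  case 0
  then show ?case by simp
next
  case (Suc k)
  have "dia_pow n (Suc k) a \<in> x \<longleftrightarrow> (\<exists>y. canon_path k x y \<and> dia_any n a \<in> y)"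
    using Suc by simp
  also have "\<dots> \<longleftrightarrow> (\<exists>y z. canon_path k x y \<and> mcs y \<and> canon_step y z \<and> mcs z \<and> a \<in> z)"
    using mcs_dia_any[OF _ Suc.prems] canon_path_mcs[OF _ x] by blast
  finally show ?case by auto
qed

lemma mcs_dia_le:
  assumes x: "mcs x" and a: "wf n a"
  shows "dia_le n k a \<in> x \<longleftrightarrow> (\<exists>j\<le>k. \<exists>y. canon_path j x y \<and> a \<in> y)"
proof -
  have "dia_le n k a \<in> x \<longleftrightarrow> (\<exists>j\<in>set [0..<Suc k]. dia_pow n j a \<in> x)"
    unfolding dia_le_def using mcs_BigOr[OF x] a by auto
  also have "\<dots> \<longleftrightarrow> (\<exists>j\<le>k. dia_pow n j a \<in> x)"
    unfolding set_upt by (meson atLeastLessThan_iff le0 less_Suc_eq_le)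
  finally show ?thesis using mcs_dia_pow[OF x a] by simp
qed

definition logic_of :: "fm set set \<Rightarrow> fm set" where
  "logic_of W = {a. wf n a \<and> (\<forall>s. (\<forall>k. wf n (s k)) \<longrightarrow> (\<forall>w\<in>W. subst s a \<in> w))}"

context
  fixes W assumes W_mcs: "\<forall>w\<in>W. mcs w"
begin

lemma theorems_subset_logic_of: "L \<subseteq> logic_of W"
  using theorem_wf subst_closed mcs_theorem W_mcs by (auto simp: logic_of_def)

lemma normal_logic_of:
  assumes successor_closed: "\<And>w i y. w \<in> W \<Longrightarrow> i < n \<Longrightarrow> mcs y \<Longrightarrow> canon_rel i w y \<Longrightarrow> y \<in> W"
  shows "normal_logic n (logic_of W)"
proof -
  have closed_mp: "b \<in> logic_of W" if a: "a \<in> logic_of W" and ab: "Imp a b \<in> logic_of W" for a b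
  proof -
    have "subst s b \<in> w" if s: "\<forall>k. wf n (s k)" and w: "w \<in> W" for s w
    proof -
      have "subst s a \<in> w" "Imp (subst s a) (subst s b) \<in> w"
        using a ab s w by (auto simp: logic_of_def)
      moreover have "wf n (subst s a)" "wf n (subst s b)"
        using ab s wf_subst by (auto simp: logic_of_def)
      ultimately show ?thesis using mcs_Imp W_mcs w by blast
    qed
    then show ?thesis using ab by (simp add: logic_of_def)
  qed
  have closed_nec: "Box i a \<in> logic_of W" if i: "i < n" and a: "a \<in> logic_of W" for i a
  proof -
    have "subst s (Box i a) \<in> w" if s: "\<forall>k. wf n (s k)" and w: "w \<in> W" for s w
    proof -
      have "subst s a \<in> y" if "mcs y" "canon_rel i w y" for y
        using a s successor_closed[OF w i that] by (simp add: logic_of_def)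
      moreover have "wf n (subst s a)" using a s wf_subst by (simp add: logic_of_def)
      ultimately show ?thesis using mcs_Box W_mcs w i by simp
    qed
    then show ?thesis using a i by (simp add: logic_of_def)
  qed
  have closed_subst: "subst s a \<in> logic_of W" if "\<forall>k. wf n (s k)" "a \<in> logic_of W" for s a
    using that wf_subst by (simp add: logic_of_def subst_subst)
  have wf_logic_of: "\<forall>a\<in>logic_of W. wf n a"
    by (simp add: logic_of_def)
  show ?thesis
    unfolding normal_logic_def
    using wf_logic_of closed_mp closed_nec closed_subst theorems_subset_logic_of[THEN subsetD]
      ax_weaken ax_imp_distrib ax_double_neg ax_K
    by meson
qed

end

end

locale pretransitive_modal_logic = normal_modal_logic +
  fixes m :: nat
  assumes pretrans: "pretrans_ax n m \<in> L"
begin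

text \<open>For \<open>m = pt_index n L\<close> these are \<open>DiaS n L\<close> and \<open>BoxS n L\<close>. Any pretransitivity index
  is allowed because extensions of \<open>L\<close> are interpreted with the index of \<open>L\<close>.\<close>

abbreviation DS :: "fm \<Rightarrow> fm" where "DS a \<equiv> dia_le n m a"
abbreviation BS :: "fm \<Rightarrow> fm" where "BS a \<equiv> Neg (dia_le n m (Neg a))"

lemma canon_path_Suc_shortcut:
  assumes x: "mcs x" and a: "wf n a" and "canon_path (Suc m) x y" and "a \<in> y"
  shows "\<exists>j\<le>m. \<exists>y'. canon_path j x y' \<and> a \<in> y'"
proof -
  have "subst (\<lambda>_. a) (pretrans_ax n m) \<in> x"
    using subst_closed[OF _ pretrans] mcs_theorem[OF x] a by auto
  then have "Imp (dia_pow n (Suc m) a) (dia_le n m a) \<in> x"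
    by (simp add: pretrans_ax_def del: dia_pow.simps)
  moreover have "dia_pow n (Suc m) a \<in> x"
    using mcs_dia_pow[OF x a] assms(3,4) by blast
  ultimately have "dia_le n m a \<in> x"
    using mcs_Imp[OF x] a by simp
  then show ?thesis using mcs_dia_le[OF x a] by blast
qed

lemma canon_path_shortcut:
  assumes a: "wf n a"
  shows "mcs x \<Longrightarrow> canon_path j x z \<Longrightarrow> a \<in> z \<Longrightarrow> \<exists>k\<le>m. \<exists>y. canon_path k x y \<and> a \<in> y"
proof (induction j arbitrary: x z rule: less_induct)
  case (less j)
  show ?case
  proof (cases "j \<le> m")
    case True
    then show ?thesis using less.prems by blast
  next
    case False
    then obtain r where r: "j = r + Suc m"
      by (metis add.commute le_Suc_ex not_less_eq_eq)
    then obtain u where u: "canon_path r x u" "canon_path (Suc m) u z"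
      using canon_path_add less.prems(2) by blast
    have "mcs u" using canon_path_mcs u(1) less.prems(1) by blast
    then obtain k w where "k \<le> m" "canon_path k u w" "a \<in> w"
      using canon_path_Suc_shortcut[OF _ a u(2) less.prems(3)] by blast
    moreover have "canon_path (r + k) x w"
      using canon_path_add u(1) \<open>canon_path k u w\<close> by blast
    ultimately show ?thesis using less.IH[of "r + k"] less.prems(1) r by auto
  qed
qed

definition reach :: "fm set \<Rightarrow> fm set \<Rightarrow> bool" where
  "reach x y \<longleftrightarrow> (\<exists>k. canon_path k x y)"

lemma reach_refl: "reach x x"
  by (auto simp: reach_def intro: exI[of _ 0])

lemma reach_trans: "reach x y \<Longrightarrow> reach y z \<Longrightarrow> reach x z"
  unfolding reach_def using canon_path_add by blast

lemma reach_mcs: "reach x y \<Longrightarrow> mcs x \<Longrightarrow> mcs y"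
  unfolding reach_def using canon_path_mcs by blast

lemma reach_if_canon_rel: "canon_rel i x y \<Longrightarrow> i < n \<Longrightarrow> mcs x \<Longrightarrow> mcs y \<Longrightarrow> reach x y"
  unfolding reach_def by (intro exI[of _ 1]) (auto simp: canon_step_def)

lemma mcs_DS:
  assumes x: "mcs x" and a: "wf n a"
  shows "DS a \<in> x \<longleftrightarrow> (\<exists>y. reach x y \<and> a \<in> y)"
  unfolding mcs_dia_le[OF x a] reach_def using canon_path_shortcut[OF a x] by blast

lemma mcs_BS:
  assumes x: "mcs x" and a: "wf n a"
  shows "BS a \<in> x \<longleftrightarrow> (\<forall>y. reach x y \<longrightarrow> a \<in> y)"
proof -
  have "BS a \<in> x \<longleftrightarrow> \<not> (\<exists>y. reach x y \<and> Neg a \<in> y)"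
    using mcs_Neg[OF x] mcs_DS[OF x] a by simp
  then show ?thesis using reach_mcs[OF _ x] mcs_Neg[OF _ a] by auto
qed

lemma mcs_BS_BS:
  assumes x: "mcs x" and a: "wf n a" and "BS a \<in> x"
  shows "BS (BS a) \<in> x"
proof -
  have "BS a \<in> y" if "reach x y" for y
    using mcs_BS[OF reach_mcs[OF that x] a] mcs_BS[OF x a] assms(3) reach_trans[OF that] by blast
  then show ?thesis using mcs_BS[OF x, of "BS a"] a by simp
qed

lemma mcs_DS_DS:
  assumes x: "mcs x" and a: "wf n a" and "DS (DS a) \<in> x"
  shows "DS a \<in> x"
proof -
  obtain y where y: "reach x y" "DS a \<in> y"
    using mcs_DS[OF x, of "DS a"] a assms(3) by auto
  then obtain z where "reach y z" "a \<in> z"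
    using mcs_DS[OF reach_mcs[OF y(1) x] a] by blast
  then show ?thesis using mcs_DS[OF x a] reach_trans[OF y(1)] by blast
qed

text \<open>\<open>B\<^sub>1\<close> makes \<open>reach\<close> symmetric as far as formulas are concerned.\<close>

lemma BS_if_DS_BS:
  assumes B1: "\<And>p. wf n p \<Longrightarrow> Imp p (BS (Or (DS p) Bot)) \<in> L"
    and x: "mcs x" and a: "wf n a" and "DS (BS a) \<in> x"
  shows "BS a \<in> x"
proof (rule ccontr)
  let ?p = "DS (Neg a)"
  have wp: "wf n ?p" using a by simp
  obtain y where y: "reach x y" "BS a \<in> y"
    using mcs_DS[OF x] \<open>DS (BS a) \<in> x\<close> a by auto
  have my: "mcs y" using reach_mcs[OF y(1) x] .
  assume "BS a \<notin> x"
  then have "?p \<in> x" using mcs_Neg[OF x] a by simp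
  moreover have "Imp ?p (BS (Or (DS ?p) Bot)) \<in> x"
    by (rule mcs_theorem[OF x B1[OF wp]])
  ultimately have "BS (Or (DS ?p) Bot) \<in> x"
    using mcs_Imp[OF x] wp by simp
  then have "Or (DS ?p) Bot \<in> y"
    using mcs_BS[OF x, of "Or (DS ?p) Bot"] wp y(1) by simp
  then have "?p \<in> y"
    using mcs_Or[OF my] mcs_Bot[OF my] mcs_DS_DS[OF my, of "Neg a"] a by simp
  then show False using y(2) mcs_Neg[OF my] wp by simp
qed

text \<open>Unlike \<open>reach\<close>, which it contains, \<open>sees\<close> is determined by formulas, so upper bounds
  of chains exist for it; this is what the Zorn argument below needs.\<close>

definition sees :: "fm set \<Rightarrow> fm set \<Rightarrow> bool" where
  "sees x y \<longleftrightarrow> (\<forall>a. wf n a \<longrightarrow> BS a \<in> x \<longrightarrow> a \<in> y)"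

lemma sees_if_reach: "mcs x \<Longrightarrow> reach x y \<Longrightarrow> sees x y"
  unfolding sees_def using mcs_BS by blast

lemma sees_refl: "mcs x \<Longrightarrow> sees x x"
  using sees_if_reach reach_refl by blast

lemma sees_trans:
  assumes "mcs x" and "sees x y" and "sees y z"
  shows "sees x z"
  unfolding sees_def
proof (intro allI impI)
  fix a assume "wf n a" "BS a \<in> x"
  then have "BS (BS a) \<in> x" using mcs_BS_BS assms(1) by blast
  then show "a \<in> z" using assms(2,3) \<open>wf n a\<close> by (simp add: sees_def)
qed

lemma DS_if_sees:
  assumes x: "mcs x" and y: "mcs y" and "sees x y" and a: "wf n a" and "a \<in> y"
  shows "DS a \<in> x"
proof (rule ccontr)
  assume "DS a \<notin> x"
  then have "BS (Neg a) \<in> x"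
    using mcs_DS[OF x a] mcs_BS[OF x, of "Neg a"] mcs_Neg reach_mcs[OF _ x] a by auto
  then have "Neg a \<in> y" using \<open>sees x y\<close> a by (simp add: sees_def)
  then show False using mcs_Neg[OF y a] \<open>a \<in> y\<close> by simp
qed

definition boxed :: "fm set \<Rightarrow> fm set" where
  "boxed x = {a. wf n a \<and> BS a \<in> x}"

lemma sees_iff_boxed_subset: "sees x y \<longleftrightarrow> boxed x \<subseteq> y"
  by (auto simp: sees_def boxed_def)

lemma boxed_mono: "mcs x \<Longrightarrow> sees x y \<Longrightarrow> boxed x \<subseteq> boxed y"
  using mcs_BS_BS by (auto simp: sees_def boxed_def)

lemma boxed_subset: "mcs x \<Longrightarrow> boxed x \<subseteq> x"
  using sees_refl sees_iff_boxed_subset by blast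

lemma boxed_chain_bounded:
  assumes y: "mcs y" and "C \<noteq> {}" and chain: "subset.chain {boxed w | w. mcs w \<and> sees y w} C"
  shows "\<exists>u. mcs u \<and> sees y u \<and> (\<forall>X\<in>C. X \<subseteq> boxed u)"
proof -
  have C: "\<And>X. X \<in> C \<Longrightarrow> \<exists>w. X = boxed w \<and> mcs w \<and> sees y w"
    using chain by (auto simp: subset_chain_def)
  have "\<not> derivable X Bot" if "X \<in> C" for X
  proof
    assume "derivable X Bot"
    obtain w where "X = boxed w" "mcs w" using C[OF \<open>X \<in> C\<close>] by blast
    then show False
      using derivable_mono[OF \<open>derivable X Bot\<close>] boxed_subset by (auto simp: mcs_def)
  qed
  then have "\<not> derivable (\<Union>C) Bot"
    using consistent_Union_chain[OF \<open>C \<noteq> {}\<close> chain] by blast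
  moreover have "\<forall>a\<in>\<Union>C. wf n a" using C by (fastforce simp: boxed_def)
  ultimately obtain u where u: "mcs u" "\<Union>C \<subseteq> u" using lindenbaum by blast
  have bound: "X \<subseteq> boxed u \<and> sees y u" if X: "X \<in> C" for X
  proof -
    obtain w where w: "X = boxed w" "mcs w" "sees y w" using C[OF X] by blast
    then have "sees w u" using X u(2) sees_iff_boxed_subset by blast
    then show ?thesis using w boxed_mono sees_trans y by blast
  qed
  then show ?thesis using u(1) \<open>C \<noteq> {}\<close> by blast
qed

text \<open>Zorn's lemma applied to the sets \<open>boxed w\<close>, which grow along \<open>sees\<close>: a maximal one
  belongs to a final cluster.\<close>

lemma final_point_exists:
  assumes y: "mcs y"
  shows "\<exists>z. mcs z \<and> sees y z \<and> (\<forall>w. mcs w \<longrightarrow> sees z w \<longrightarrow> sees w z)"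
proof -
  define A where "A = {boxed w | w. mcs w \<and> sees y w}"
  have "\<forall>C\<in>chains A. \<exists>U\<in>A. \<forall>X\<in>C. X \<subseteq> U"
  proof
    fix C assume "C \<in> chains A"
    then have chain: "subset.chain A C"
      by (simp add: chains_def chain_subset_def subset_chain_def)
    show "\<exists>U\<in>A. \<forall>X\<in>C. X \<subseteq> U"
    proof (cases "C = {}")
      case True
      then show ?thesis using y sees_refl by (auto simp: A_def)
    next
      case False
      then show ?thesis
        using boxed_chain_bounded[OF y False] chain by (auto simp: A_def)
    qed
  qed
  from Zorn_Lemma2[OF this] obtain M where M: "M \<in> A" "\<forall>X\<in>A. M \<subseteq> X \<longrightarrow> X = M"
    by blast
  then obtain z where z: "M = boxed z" "mcs z" "sees y z" by (auto simp: A_def)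
  have "sees w z" if "mcs w" "sees z w" for w
  proof -
    have "boxed w \<in> A" using that sees_trans[OF y z(3)] by (auto simp: A_def)
    then have "boxed w = boxed z" using M z(1) boxed_mono[OF z(2) that(2)] by blast
    then show ?thesis using boxed_subset[OF z(2)] sees_iff_boxed_subset by simp
  qed
  then show ?thesis using z by blast
qed

definition cone :: "fm set \<Rightarrow> fm set set" where
  "cone z = {w. mcs w \<and> sees z w}"

lemma cone_successor_closed:
  "mcs z \<Longrightarrow> w \<in> cone z \<Longrightarrow> i < n \<Longrightarrow> mcs y \<Longrightarrow> canon_rel i w y \<Longrightarrow> y \<in> cone z"
  unfolding cone_def using sees_trans sees_if_reach reach_if_canon_rel by blast

lemma B1_valid_in_final_cone:
  assumes z: "mcs z" and final: "\<forall>w. mcs w \<longrightarrow> sees z w \<longrightarrow> sees w z"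
    and w: "w \<in> cone z" and p: "wf n p" and "p \<in> w"
  shows "BS (Or (DS p) Bot) \<in> w"
proof -
  have "DS p \<in> u" if "reach w u" for u
  proof -
    have "mcs w" "sees z w" "mcs u" using w reach_mcs[OF that] by (auto simp: cone_def)
    then have "sees u w"
      using final sees_trans[OF z _ sees_if_reach[OF _ that]] sees_trans[of u z w] by blast
    then show ?thesis using DS_if_sees \<open>mcs u\<close> \<open>mcs w\<close> p \<open>p \<in> w\<close> by blast
  qed
  moreover have "mcs w" using w by (simp add: cone_def)
  ultimately show ?thesis
    using mcs_BS mcs_Or reach_mcs p by simp
qed

lemma ext1_subset_logic_of_final_cone:
  assumes "m = pt_index n L"
    and z: "mcs z" and final: "\<forall>w. mcs w \<longrightarrow> sees z w \<longrightarrow> sees w z"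
  shows "ext1 n L \<subseteq> logic_of (cone z)"
proof -
  have W: "\<forall>w\<in>cone z. mcs w" by (simp add: cone_def)
  have "subst s (B1 n L) \<in> w" if s: "\<forall>k. wf n (s k)" and w: "w \<in> cone z" for s w
  proof -
    have "s 1 \<in> w \<longrightarrow> BS (Or (DS (s 1)) Bot) \<in> w"
      using B1_valid_in_final_cone[OF z final w] s by simp
    then show ?thesis
      using mcs_Imp s W w by (simp add: subst_B1 BoxS_def DiaS_def assms(1)[symmetric])
  qed
  then have "B1 n L \<in> logic_of (cone z)"
    by (simp add: logic_of_def wf_B1)
  then show ?thesis
    using normal_logic_of[OF W cone_successor_closed[OF z]] theorems_subset_logic_of[OF W]
    by (auto simp: ext1_def)
qed

end


lemma ext1_imp_if_DiaS_imp:
  assumes "normal_logic n L" and "pretransitive n L" and "wf n \<phi>" and "wf n \<psi>"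
    and H: "Imp (DiaS n L (BoxS n L \<psi>)) (DiaS n L (BoxS n L \<phi>)) \<in> L"
  shows "Imp (BoxS n L \<psi>) (BoxS n L \<phi>) \<in> ext1 n L"
  unfolding ext1_def
proof (rule InterI, clarify)
  fix L' assume "normal_logic n L'" "L \<subseteq> L'" "B1 n L \<in> L'"
  interpret pretransitive_modal_logic n L' "pt_index n L"
    using \<open>normal_logic n L'\<close> \<open>L \<subseteq> L'\<close> pretrans_ax_pt_index[OF assms(2)]
    by unfold_locales auto
  have B1: "Imp p (BS (Or (DS p) Bot)) \<in> L'" if "wf n p" for p
    using subst_closed[OF _ \<open>B1 n L \<in> L'\<close>, of "\<lambda>_. p"] that
    by (simp add: subst_B1 BoxS_def DiaS_def)
  show "Imp (BoxS n L \<psi>) (BoxS n L \<phi>) \<in> L'"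
    unfolding BoxS_def DiaS_def
  proof (rule theorem_if_in_all_mcs)
    fix x assume x: "mcs x"
    have "Imp (DS (BS \<psi>)) (DS (BS \<phi>)) \<in> x"
      using H[unfolded BoxS_def DiaS_def] \<open>L \<subseteq> L'\<close> mcs_theorem[OF x] by blast
    then have "DS (BS \<psi>) \<in> x \<longrightarrow> DS (BS \<phi>) \<in> x"
      using mcs_Imp[OF x] assms(3,4) by simp
    moreover have "DS (BS \<psi>) \<in> x" if "BS \<psi> \<in> x"
      using that mcs_DS[OF x, of "BS \<psi>"] reach_refl assms(4) by auto
    ultimately show "Imp (BS \<psi>) (BS \<phi>) \<in> x"
      using mcs_Imp[OF x] BS_if_DS_BS[OF B1 x] assms(3,4) by simp
  qed (use assms(3,4) in simp)
qed

lemma DiaS_imp_if_ext1_imp: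
  assumes "normal_logic n L" and "pretransitive n L" and "wf n \<phi>" and "wf n \<psi>"
    and E: "Imp (BoxS n L \<psi>) (BoxS n L \<phi>) \<in> ext1 n L"
  shows "Imp (DiaS n L (BoxS n L \<psi>)) (DiaS n L (BoxS n L \<phi>)) \<in> L"
proof -
  interpret pretransitive_modal_logic n L "pt_index n L"
    using assms(1) pretrans_ax_pt_index[OF assms(2)] by unfold_locales
  have wf: "wf n (BS \<psi>)" "wf n (BS \<phi>)" using assms(3,4) by simp_all
  show ?thesis
    unfolding BoxS_def DiaS_def
  proof (rule ccontr)
    assume "Imp (DS (BS \<psi>)) (DS (BS \<phi>)) \<notin> L"
    then obtain x where x: "mcs x" "DS (BS \<psi>) \<in> x" "DS (BS \<phi>) \<notin> x"
      using theorem_if_in_all_mcs mcs_Imp wf by (metis wf.simps(3) wf_dia_le)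
    obtain y where y: "mcs y" "sees x y" "BS \<psi> \<in> y"
      using mcs_DS[OF x(1)] x(2) wf(1) sees_if_reach reach_mcs x(1) by blast
    obtain z where z: "mcs z" "sees y z" "\<forall>w. mcs w \<longrightarrow> sees z w \<longrightarrow> sees w z"
      using final_point_exists[OF y(1)] by blast
    have "BS \<psi> \<in> z" using z(2) mcs_BS_BS[OF y(1) assms(4) y(3)] wf(1) by (simp add: sees_def)
    moreover have "BS \<phi> \<notin> z"
      using DS_if_sees[OF x(1) z(1) sees_trans[OF x(1) y(2) z(2)] wf(2)] x(3) by blast
    moreover have "ext1 n L \<subseteq> logic_of (cone z)"
      using ext1_subset_logic_of_final_cone[OF refl z(1,3)] .
    then have "subst Var (Imp (BS \<psi>) (BS \<phi>)) \<in> z"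
      using E z(1) sees_refl[OF z(1)] by (auto simp: logic_of_def BoxS_def DiaS_def cone_def)
    ultimately show False using mcs_Imp[OF z(1)] wf by (simp add: subst_Var_id)
  qed
qed

theorem theorem3p6:
  fixes n :: nat and L :: "fm set" and \<phi> \<psi> :: fm
  assumes "normal_logic n L" and "pretransitive n L"
    and "wf n \<phi>" and "wf n \<psi>"
  shows "Imp (BoxS n L \<psi>) (BoxS n L \<phi>) \<in> ext1 n L \<longleftrightarrow>
         Imp (DiaS n L (BoxS n L \<psi>)) (DiaS n L (BoxS n L \<phi>)) \<in> L"
  using DiaS_imp_if_ext1_imp[OF assms] ext1_imp_if_DiaS_imp[OF assms] by blast

end
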